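(* Let $f:\mathbb{R}^n\to\mathbb{R}^n$ be locally Lipschitz with $f(0)=0$ and suppose there exists a convex Lyapunov function $V\in C^1(\mathbb{R}^n;\mathbb{R}^+)$ for $\dot z=f(z)$. Let $\bar\varphi:\mathbb{R}^n\to(0,+\infty)$ be continuous such that for every $x\in\mathbb{R}^n$ and $h\in[0,\bar\varphi(x)]$ the equation $Y=x+hf(Y)$ has a unique solution $Y\in\mathbb{R}^n$. Then for each $r>0$, $0\in\mathbb{R}^n$ is URGAS for the hybrid system (2.2) with $\varphi(x):=\min\{\bar\varphi(x),r\}$ and $F(h,x):=f(Y)$, where $Y$ is the solution of $Y=x+hf(Y)$ (implicit Euler method).
   Context: The hybrid system (2.2): for each locally bounded $u:\mathbb{R}^+\to\mathbb{R}^+$ and $x_0$, $\tau_0=0$, $x(0)=x_0$, $h_i=\varphi(x(\tau_i))\exp(-u(\tau_i))$, $\tau_{i+1}=\tau_i+h_i$, $x(t)=x(\tau_i)+(t-\tau_i)F(h_i,x(\tau_i))$ on $[\tau_i,\tau_{i+1}]$; solution $x(t,x_0;u)$. URGAS: (a) for every $\varepsilon>0$ there is $\delta>0$ with $|x_0|<\delta\Rightarrow|x(t,x_0;u)|<\varepsilon$ for all $t\ge0$ and all $u$; (b) for every $R$, $\sup\{|x(t,x_0;u)|:t\ge0,|x_0|\le R,u\}<\infty$; (c) for all $\varepsilon,R$ there is $T$ with $|x(t,x_0;u)|\le\varepsilon$ for $t\ge T$, $|x_0|\le R$, all locally bounded $u\ge0$. A Lyapunov function for $\dot z=f(z)$ is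 a positive definite, radially unbounded $C^1$ function $V$ with $\nabla V(x)f(x)<0$ for $x\ne0$. *)

theory Defs
  imports "HOL-Analysis.Analysis"
begin

definition loc_lipschitz :: "('a::metric_space \<Rightarrow> 'b::metric_space) \<Rightarrow> bool" where
  "loc_lipschitz f \<longleftrightarrow> (\<forall>x. \<exists>\<delta>>0. \<exists>L. L-lipschitz_on (ball x \<delta>) f)"

definition lyapunov_function ::
  "(real^'n \<Rightarrow> real) \<Rightarrow> (real^'n \<Rightarrow> real^'n) \<Rightarrow> bool" where
  "lyapunov_function V f \<longleftrightarrow>
     V 0 = 0 \<and> (\<forall>x. x \<noteq> 0 \<longrightarrow> V x > 0) \<and>
     filterlim V at_top at_infinity \<and>
     (\<exists>g. continuous_on UNIV g \<and>
          (\<forall>x. (V has_derivative (\<lambda>v. g x \<bullet> v)) (at x)) \<and>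
          (\<forall>x. x \<noteq> 0 \<longrightarrow> g x \<bullet> f x < 0))"

definition admissible_input :: "(real \<Rightarrow> real) \<Rightarrow> bool" where
  "admissible_input u \<longleftrightarrow> (\<forall>t\<ge>0. u t \<ge> 0) \<and> (\<forall>T. bounded (u ` {0..T}))"

text \<open>Hybrid system (2.2): the i-th sampling time tau_i together with x(tau_i).\<close>
primrec hyb_node ::
  "('a::real_normed_vector \<Rightarrow> real) \<Rightarrow> (real \<Rightarrow> 'a \<Rightarrow> 'a) \<Rightarrow> (real \<Rightarrow> real) \<Rightarrow> 'a \<Rightarrow> nat \<Rightarrow> real \<times> 'a"
where
  "hyb_node \<phi> F u x0 0 = (0, x0)"
| "hyb_node \<phi> F u x0 (Suc i) =
     (let \<tau> = fst (hyb_node \<phi> F u x0 i); x = snd (hyb_node \<phi> F u x0 i);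
          h = \<phi> x * exp (- u \<tau>) in (\<tau> + h, x + h *\<^sub>R F h x))"

definition hyb_tau where "hyb_tau \<phi> F u x0 i = fst (hyb_node \<phi> F u x0 i)"

definition hyb_step where
  "hyb_step \<phi> F u x0 i = \<phi> (snd (hyb_node \<phi> F u x0 i)) * exp (- u (hyb_tau \<phi> F u x0 i))"

definition hyb_sol where
  "hyb_sol \<phi> F u x0 i t = snd (hyb_node \<phi> F u x0 i)
      + (t - hyb_tau \<phi> F u x0 i) *\<^sub>R F (hyb_step \<phi> F u x0 i) (snd (hyb_node \<phi> F u x0 i))"

text \<open>Every t \<ge> 0 in the domain of the solution lies in
  some [tau_i, tau_(i+1)]; we also require the solution to be defined on all of R+
  (tau_i \<rightarrow> \<infinity>).\<close>
definition URGAS ::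
  "('a::real_normed_vector \<Rightarrow> real) \<Rightarrow> (real \<Rightarrow> 'a \<Rightarrow> 'a) \<Rightarrow> bool" where
  "URGAS \<phi> F \<longleftrightarrow>
     (\<forall>x0 u. admissible_input u \<longrightarrow> filterlim (hyb_tau \<phi> F u x0) at_top sequentially) \<and>
     (\<forall>\<epsilon>>0. \<exists>\<delta>>0. \<forall>x0 u i t. admissible_input u \<and> norm x0 < \<delta> \<and>
        t \<in> {hyb_tau \<phi> F u x0 i .. hyb_tau \<phi> F u x0 (Suc i)}
        \<longrightarrow> norm (hyb_sol \<phi> F u x0 i t) < \<epsilon>) \<and>
     (\<forall>R. \<exists>M. \<forall>x0 u i t. admissible_input u \<and> norm x0 \<le> R \<and>
        t \<in> {hyb_tau \<phi> F u x0 i .. hyb_tau \<phi> F u x0 (Suc i)}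
        \<longrightarrow> norm (hyb_sol \<phi> F u x0 i t) \<le> M) \<and>
     (\<forall>\<epsilon>>0. \<forall>R. \<exists>T. \<forall>x0 u i t. admissible_input u \<and> norm x0 \<le> R \<and>
        t \<in> {hyb_tau \<phi> F u x0 i .. hyb_tau \<phi> F u x0 (Suc i)} \<and> t \<ge> T
        \<longrightarrow> norm (hyb_sol \<phi> F u x0 i t) \<le> \<epsilon>)"

end

theory Submission
  imports Defs
begin

(* The theorem is an instance of a general Lyapunov criterion for the hybrid
   sampled system: URGAS holds whenever V is a continuous, positive definite, radially
   unbounded function that (i) decreases along every admissible step x \<mapsto> x + h F(h,x) by at
   least h W(x + h F(h,x)) for a continuous W positive away from 0, (ii) does not increase
   along the segment joining x to x + h F(h,x), and (iii) the sampling map \<phi> is continuous,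
   positive and bounded.  Stability and boundedness come from V(x(t)) \<le> V(x0); the sampling
   times diverge because \<phi> is bounded below on sublevel sets of V; attractivity follows since
   V decreases at a uniform rate c while V(x(\<tau>_i)) stays above a level \<eta>. *)

section \<open>Convex differentiable functions and the implicit Euler step\<close>

lemma convex_on_gradient_inequality:
  fixes V :: "'a::real_normed_vector \<Rightarrow> real"
  assumes convex: "convex_on UNIV V" and deriv: "(V has_derivative D) (at x)"
  shows "V x + D (y - x) \<le> V y"
proof -
  define p where "p s = V (x + s *\<^sub>R (y - x))" for s :: real
  have "convex_on UNIV p"
  proof (rule convex_onI)
    fix t a b :: real assume "0 < t" "t < 1"
    have "x + ((1 - t) * a + t * b) *\<^sub>R (y - x)
        = (1 - t) *\<^sub>R (x + a *\<^sub>R (y - x)) + t *\<^sub>R (x + b *\<^sub>R (y - x))"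
      by (simp add: algebra_simps)
    then show "p ((1 - t) *\<^sub>R a + t *\<^sub>R b) \<le> (1 - t) * p a + t * p b"
      unfolding p_def using convex_onD[OF convex, of t] \<open>0 < t\<close> \<open>t < 1\<close> by simp
  qed simp
  moreover have "(p has_field_derivative D (y - x)) (at 0)"
  proof -
    have line: "((\<lambda>s. x + s *\<^sub>R (y - x)) has_derivative (\<lambda>s. s *\<^sub>R (y - x))) (at 0)"
      by (auto intro!: derivative_eq_intros)
    have "(p has_derivative (\<lambda>s. D (s *\<^sub>R (y - x)))) (at 0)"
      unfolding p_def using has_derivative_compose[OF line, of V D] deriv by simp
    moreover have "(\<lambda>s. D (s *\<^sub>R (y - x))) = (\<lambda>s. D (y - x) * s)"
      using linear_scale[OF has_derivative_linear[OF deriv]] by (auto simp: mult.commute)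
    ultimately show ?thesis by (simp add: has_field_derivative_def)
  qed
  ultimately have "D (y - x) \<le> p 1 - p 0"
    using convex_on_imp_above_tangent[OF _ connected_UNIV _ _ _, of p 0 1 "D (y - x)"] by simp
  then show ?thesis unfolding p_def by simp
qed

lemma implicit_euler_decrease:
  fixes V :: "'a::real_inner \<Rightarrow> real"
  assumes "convex_on UNIV V" and "\<And>z. (V has_derivative (\<lambda>v. g z \<bullet> v)) (at z)"
    and "Y = x + h *\<^sub>R f Y"
  shows "V Y + h * (- (g Y \<bullet> f Y)) \<le> V x"
proof -
  have "V Y + g Y \<bullet> (x - Y) \<le> V x"
    using convex_on_gradient_inequality[OF assms(1,2)] .
  moreover have "x - Y = - (h *\<^sub>R f Y)" using assms(3) by (simp add: algebra_simps)
  ultimately show ?thesis by (simp add: inner_minus_right)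
qed

text \<open>The piecewise linear interpolation between x and Y = x + h f(Y) is a convex
  combination of x and Y, so a convex V with V Y \<le> V x stays below V x on it.\<close>
lemma implicit_euler_segment:
  fixes V :: "'a::real_vector \<Rightarrow> real"
  assumes "convex_on UNIV V" and "Y = x + h *\<^sub>R f Y" and "V Y \<le> V x"
    and "0 \<le> s" and "s \<le> 1"
  shows "V (x + (s * h) *\<^sub>R f Y) \<le> V x"
proof -
  have "x + (s * h) *\<^sub>R f Y = (1 - s) *\<^sub>R x + s *\<^sub>R Y"
    by (subst (2) assms(2)) (simp add: algebra_simps)
  then have "V (x + (s * h) *\<^sub>R f Y) \<le> (1 - s) * V x + s * V Y"
    using convex_onD[OF assms(1)] assms(4,5) by simp
  also have "\<dots> \<le> V x"
    using mult_left_mono[OF assms(3,4)] by (simp add: algebra_simps)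
  finally show ?thesis .
qed

section \<open>Radially unbounded functions\<close>

lemma coercive_sublevel_bounded:
  fixes V :: "'a::real_normed_vector \<Rightarrow> real"
  assumes "filterlim V at_top at_infinity"
  shows "bounded {z. V z \<le> M}"
proof -
  have "eventually (\<lambda>z. M + 1 \<le> V z) at_infinity"
    using assms unfolding filterlim_at_top by blast
  then obtain b where b: "\<And>z. b \<le> norm z \<Longrightarrow> M + 1 \<le> V z"
    unfolding eventually_at_infinity by blast
  have "norm z \<le> b" if "V z \<le> M" for z
  proof (rule ccontr)
    assume "\<not> norm z \<le> b"
    then have "M + 1 \<le> V z" using b by simp
    then show False using that by simp
  qed
  then show ?thesis unfolding bounded_iff by blast
qed

text \<open>A continuous function positive on a closed set C is bounded away from 0 on the
  part of C lying in a sublevel set of a continuous radially unbounded V (this part is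
  compact).\<close>
lemma sublevel_positive_lower_bound:
  fixes V q :: "'a::euclidean_space \<Rightarrow> real"
  assumes "continuous_on UNIV V" and "filterlim V at_top at_infinity"
    and "closed C" and "continuous_on UNIV q" and "\<And>z. z \<in> C \<Longrightarrow> 0 < q z"
  shows "\<exists>m>0. \<forall>z\<in>C. V z \<le> M \<longrightarrow> m \<le> q z"
proof -
  define K where "K = C \<inter> {z. V z \<le> M}"
  have "bounded K"
    using coercive_sublevel_bounded[OF assms(2), of M] unfolding K_def by (rule bounded_subset) blast
  moreover have "closed K"
    unfolding K_def using assms(3) closed_Collect_le[OF assms(1) continuous_on_const] by (rule closed_Int)
  ultimately have "compact K" by (simp add: compact_eq_bounded_closed)
  show ?thesis
  proof (cases "K = {}")
    case True
    then show ?thesis unfolding K_def by (intro exI[of _ 1]) auto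
  next
    case False
    obtain z0 where "z0 \<in> K" "\<forall>z\<in>K. q z0 \<le> q z"
      using continuous_attains_inf[OF \<open>compact K\<close> False continuous_on_subset[OF assms(4)]] by blast
    then show ?thesis using assms(5) unfolding K_def by (intro exI[of _ "q z0"]) auto
  qed
qed

lemma positive_definite_small_level:
  fixes V :: "'a::euclidean_space \<Rightarrow> real"
  assumes "continuous_on UNIV V" and "filterlim V at_top at_infinity"
    and "\<And>z. z \<noteq> 0 \<Longrightarrow> 0 < V z" and "0 < \<epsilon>"
  shows "\<exists>\<eta>>0. \<forall>z. V z \<le> \<eta> \<longrightarrow> norm z < \<epsilon>"
proof -
  have "closed {z. \<epsilon> \<le> norm z}"
    by (intro closed_Collect_le continuous_on_const continuous_on_norm_id)
  moreover have "0 < V z" if "z \<in> {z. \<epsilon> \<le> norm z}" for z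
  proof -
    have "z \<noteq> 0" using that assms(4) by auto
    then show ?thesis by (rule assms(3))
  qed
  ultimately obtain m where m: "0 < m" "\<forall>z\<in>{z. \<epsilon> \<le> norm z}. V z \<le> 1 \<longrightarrow> m \<le> V z"
    using sublevel_positive_lower_bound[OF assms(1,2) _ assms(1)] by blast
  have "norm z < \<epsilon>" if "V z \<le> min (m / 2) 1" for z
  proof (rule ccontr)
    assume "\<not> norm z < \<epsilon>"
    then have "m \<le> V z" using m(2) that by auto
    then show False using that m(1) by linarith
  qed
  then show ?thesis using m(1) by (intro exI[of _ "min (m / 2) 1"]) auto
qed

lemma continuous_bounded_on_cball:
  fixes V :: "'a::euclidean_space \<Rightarrow> real"
  assumes "continuous_on UNIV V"
  shows "\<exists>M. \<forall>z. norm z \<le> R \<longrightarrow> V z \<le> M"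
proof -
  have "compact (V ` cball 0 R)"
    by (intro compact_continuous_image continuous_on_subset[OF assms]) auto
  then obtain M where "\<forall>y\<in>V ` cball 0 R. norm y \<le> M"
    using compact_imp_bounded bounded_iff by metis
  then show ?thesis by (intro exI[of _ M]) (force simp: abs_le_iff)
qed

section \<open>The hybrid system\<close>

lemma hyb_tau_0: "hyb_tau \<phi> F u x0 0 = 0"
  and hyb_node_0: "snd (hyb_node \<phi> F u x0 0) = x0"
  by (simp_all add: hyb_tau_def)

lemma hyb_tau_Suc: "hyb_tau \<phi> F u x0 (Suc i) = hyb_tau \<phi> F u x0 i + hyb_step \<phi> F u x0 i"
  and hyb_node_Suc: "snd (hyb_node \<phi> F u x0 (Suc i)) = snd (hyb_node \<phi> F u x0 i)
     + hyb_step \<phi> F u x0 i *\<^sub>R F (hyb_step \<phi> F u x0 i) (snd (hyb_node \<phi> F u x0 i))"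
  by (simp_all add: hyb_tau_def hyb_step_def Let_def)

locale sampled_lyapunov =
  fixes \<phi> :: "'a::euclidean_space \<Rightarrow> real" and F :: "real \<Rightarrow> 'a \<Rightarrow> 'a"
    and V W :: "'a \<Rightarrow> real" and r :: real
  assumes V_cont: "continuous_on UNIV V" and V_zero: "V 0 = 0"
    and V_pos: "\<And>x. x \<noteq> 0 \<Longrightarrow> 0 < V x" and V_coercive: "filterlim V at_top at_infinity"
    and W_cont: "continuous_on UNIV W" and W_pos: "\<And>x. x \<noteq> 0 \<Longrightarrow> 0 < W x"
    and phi_cont: "continuous_on UNIV \<phi>" and phi_pos: "\<And>x. 0 < \<phi> x"
    and phi_le: "\<And>x. \<phi> x \<le> r"
    and step_decrease: "\<And>x h. 0 < h \<Longrightarrow> h \<le> \<phi> x \<Longrightarrow>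
          V (x + h *\<^sub>R F h x) + h * W (x + h *\<^sub>R F h x) \<le> V x"
    and segment_decrease: "\<And>x h s. 0 < h \<Longrightarrow> h \<le> \<phi> x \<Longrightarrow> 0 \<le> s \<Longrightarrow> s \<le> 1 \<Longrightarrow>
          V (x + (s * h) *\<^sub>R F h x) \<le> V x"
begin

abbreviation "node u x0 i \<equiv> snd (hyb_node \<phi> F u x0 i)"
abbreviation "tau u x0 i \<equiv> hyb_tau \<phi> F u x0 i"
abbreviation "step u x0 i \<equiv> hyb_step \<phi> F u x0 i"
abbreviation "sol u x0 i t \<equiv> hyb_sol \<phi> F u x0 i t"

lemma step_pos: "0 < step u x0 i"
  using phi_pos by (simp add: hyb_step_def)

lemma tau_nonneg: "0 \<le> tau u x0 i"
  by (induction i) (simp_all add: hyb_tau_0 hyb_tau_Suc less_imp_le[OF step_pos])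

lemma tau_incseq: "incseq (tau u x0)"
  by (rule incseq_SucI) (simp add: hyb_tau_Suc less_imp_le[OF step_pos])

text \<open>Admissible inputs are nonnegative, so the actual step never exceeds \<phi>.\<close>
lemma step_le_phi:
  assumes "admissible_input u"
  shows "step u x0 i \<le> \<phi> (node u x0 i)"
proof -
  have "0 \<le> u (tau u x0 i)" using assms tau_nonneg unfolding admissible_input_def by blast
  then show ?thesis
    unfolding hyb_step_def using less_imp_le[OF phi_pos] by (intro mult_left_le) auto
qed

lemma V_node_Suc:
  assumes "admissible_input u"
  shows "V (node u x0 (Suc i)) + step u x0 i * W (node u x0 (Suc i)) \<le> V (node u x0 i)"
  unfolding hyb_node_Suc using step_decrease[OF step_pos step_le_phi[OF assms]] .

lemma V_sol_le_node:
  assumes "admissible_input u" and t: "t \<in> {tau u x0 i .. tau u x0 (Suc i)}"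
  shows "V (sol u x0 i t) \<le> V (node u x0 i)"
proof -
  define s where "s = (t - tau u x0 i) / step u x0 i"
  have "0 \<le> s" "s \<le> 1"
    using t step_pos[of u x0 i] unfolding s_def hyb_tau_Suc by (auto simp: divide_le_eq)
  moreover have "s * step u x0 i = t - tau u x0 i"
    using step_pos[of u x0 i] unfolding s_def by simp
  then have "sol u x0 i t = node u x0 i
      + (s * step u x0 i) *\<^sub>R F (step u x0 i) (node u x0 i)"
    unfolding hyb_sol_def by simp
  ultimately show ?thesis
    using segment_decrease[OF step_pos step_le_phi[OF assms(1)]] by simp
qed

lemma V_node_mono:
  assumes "admissible_input u"
  shows "V (node u x0 (Suc i)) \<le> V (node u x0 i)"
proof -
  have "sol u x0 i (tau u x0 (Suc i)) = node u x0 (Suc i)"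
    unfolding hyb_sol_def hyb_node_Suc hyb_tau_Suc by simp
  moreover have "tau u x0 (Suc i) \<in> {tau u x0 i .. tau u x0 (Suc i)}"
    using tau_incseq[of u x0] by (simp add: incseq_Suc_iff)
  ultimately show ?thesis using V_sol_le_node[OF assms] by metis
qed

lemma V_node_le_init:
  assumes "admissible_input u"
  shows "V (node u x0 i) \<le> V x0"
proof (induction i)
  case 0 then show ?case by (simp add: hyb_node_0)
next
  case (Suc i) then show ?case using V_node_mono[OF assms, of x0 i] by simp
qed

lemma V_sol_le_init:
  assumes "admissible_input u" and "t \<in> {tau u x0 i .. tau u x0 (Suc i)}"
  shows "V (sol u x0 i t) \<le> V x0"
  using V_sol_le_node[OF assms] V_node_le_init[OF assms(1)] by (rule order_trans)

text \<open>Up to any finite time Z the steps are bounded below: the input is bounded on [0,Z]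
  and \<phi> is bounded below on the sublevel set of V(x0) containing all nodes.\<close>
lemma step_lower_bound:
  assumes "admissible_input u"
  shows "\<exists>c>0. \<forall>i. tau u x0 i \<le> Z \<longrightarrow> c \<le> step u x0 i"
proof -
  have "bounded (u ` {0..Z})" using assms by (simp add: admissible_input_def)
  then obtain B where B: "\<forall>y\<in>u ` {0..Z}. norm y \<le> B" unfolding bounded_iff by blast
  obtain m where m: "0 < m" "\<forall>z\<in>UNIV. V z \<le> V x0 \<longrightarrow> m \<le> \<phi> z"
    using sublevel_positive_lower_bound[OF V_cont V_coercive closed_UNIV phi_cont phi_pos] by blast
  have "m * exp (- B) \<le> step u x0 i" if "tau u x0 i \<le> Z" for i
  proof -
    have "tau u x0 i \<in> {0..Z}" using tau_nonneg[of u x0 i] that by simp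
    then have "norm (u (tau u x0 i)) \<le> B" using B by blast
    then have "exp (- B) \<le> exp (- u (tau u x0 i))" by simp
    moreover have "m \<le> \<phi> (node u x0 i)" using m(2) V_node_le_init[OF assms] by blast
    ultimately show ?thesis unfolding hyb_step_def using m(1) by (intro mult_mono) auto
  qed
  then show ?thesis using m(1) by (intro exI[of _ "m * exp (- B)"]) auto
qed

lemma tau_unbounded:
  assumes "admissible_input u"
  shows "filterlim (tau u x0) at_top sequentially"
  unfolding filterlim_at_top
proof
  fix Z :: real
  have "\<exists>N. Z \<le> tau u x0 N"
  proof (rule ccontr)
    assume none: "\<nexists>N. Z \<le> tau u x0 N"
    have below: "tau u x0 i \<le> Z" for i
    proof -
      have "\<not> Z \<le> tau u x0 i" using none by blast
      then show ?thesis by simp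
    qed
    obtain c where c: "0 < c" "\<forall>i. tau u x0 i \<le> Z \<longrightarrow> c \<le> step u x0 i"
      using step_lower_bound[OF assms] by blast
    have linear_growth: "real i * c \<le> tau u x0 i" for i
    proof (induction i)
      case 0 then show ?case by (simp add: hyb_tau_0)
    next
      case (Suc i)
      have "c \<le> step u x0 i" using c(2) below by blast
      then show ?case using Suc hyb_tau_Suc[of \<phi> F u x0 i] by (simp add: distrib_right)
    qed
    obtain N where "Z < real N * c" using reals_Archimedean3[OF c(1)] by blast
    then show False using linear_growth[of N] below[of N] by linarith
  qed
  then obtain N where N: "Z \<le> tau u x0 N" by blast
  have "\<forall>n\<ge>N. Z \<le> tau u x0 n"
    using N tau_incseq[of u x0] unfolding incseq_def by (blast intro: order_trans)
  then show "eventually (\<lambda>i. Z \<le> tau u x0 i) sequentially"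
    unfolding eventually_sequentially by blast
qed

lemma V_node_decay:
  assumes adm: "admissible_input u" and c: "\<And>z. \<eta> < V z \<Longrightarrow> V z \<le> V x0 \<Longrightarrow> c \<le> W z"
  shows "\<eta> < V (node u x0 i) \<longrightarrow> V (node u x0 i) + c * tau u x0 i \<le> V x0"
proof (induction i)
  case 0 then show ?case by (simp add: hyb_tau_0 hyb_node_0)
next
  case (Suc i)
  show ?case
  proof
    assume above: "\<eta> < V (node u x0 (Suc i))"
    then have IH: "V (node u x0 i) + c * tau u x0 i \<le> V x0"
      using Suc V_node_mono[OF adm, of x0 i] by linarith
    have "step u x0 i * c \<le> step u x0 i * W (node u x0 (Suc i))"
      using c[OF above V_node_le_init[OF adm]] less_imp_le[OF step_pos] by (rule mult_left_mono)
    moreover have "c * tau u x0 (Suc i) = c * tau u x0 i + step u x0 i * c"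
      unfolding hyb_tau_Suc by (simp add: distrib_left mult.commute)
    ultimately show "V (node u x0 (Suc i)) + c * tau u x0 (Suc i) \<le> V x0"
      using IH V_node_Suc[OF adm, of x0 i] by linarith
  qed
qed

text \<open>Uniform stability: V(x0) small forces V, hence the norm, small along the solution.\<close>
lemma uniform_stability:
  assumes "0 < \<epsilon>"
  shows "\<exists>\<delta>>0. \<forall>x0 u i t. admissible_input u \<and> norm x0 < \<delta> \<and>
           t \<in> {tau u x0 i .. tau u x0 (Suc i)} \<longrightarrow> norm (sol u x0 i t) < \<epsilon>"
proof -
  obtain \<eta> where \<eta>: "0 < \<eta>" "\<And>z. V z \<le> \<eta> \<Longrightarrow> norm z < \<epsilon>"
    using positive_definite_small_level[OF V_cont V_coercive V_pos assms] by blast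
  have "isCont V 0" using V_cont by (simp add: continuous_on_eq_continuous_at)
  then obtain \<delta> where \<delta>: "0 < \<delta>" "\<And>z. dist z 0 < \<delta> \<Longrightarrow> dist (V z) (V 0) < \<eta>"
    using \<eta>(1) unfolding continuous_at_eps_delta by blast
  have V_small: "V z < \<eta>" if "norm z < \<delta>" for z
    using \<delta>(2)[of z] that V_zero by (simp add: dist_norm)
  have "norm (sol u x0 i t) < \<epsilon>"
    if "admissible_input u" "norm x0 < \<delta>" "t \<in> {tau u x0 i .. tau u x0 (Suc i)}" for x0 u i t
  proof -
    have "V (sol u x0 i t) \<le> V x0" using V_sol_le_init that(1,3) .
    also have "\<dots> < \<eta>" using V_small that(2) .
    finally show ?thesis using \<eta>(2) by simp
  qed
  then show ?thesis using \<delta>(1) by blast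
qed

text \<open>Uniform boundedness: the solution stays in the sublevel set of max V on the ball.\<close>
lemma uniform_boundedness:
  "\<exists>B. \<forall>x0 u i t. admissible_input u \<and> norm x0 \<le> R \<and>
     t \<in> {tau u x0 i .. tau u x0 (Suc i)} \<longrightarrow> norm (sol u x0 i t) \<le> B"
proof -
  obtain M where M: "\<And>z. norm z \<le> R \<Longrightarrow> V z \<le> M"
    using continuous_bounded_on_cball[OF V_cont] by blast
  obtain B where "\<And>z. V z \<le> M \<Longrightarrow> norm z \<le> B"
    using coercive_sublevel_bounded[OF V_coercive, of M] unfolding bounded_iff by blast
  then show ?thesis using M V_sol_le_init by (meson order_trans)
qed

text \<open>Uniform attractivity: after time M/c + r + 1 the node preceding t lies below level \<eta>,
  since otherwise V would have decreased by more than its maximum M on the initial ball.\<close>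
lemma uniform_attractivity:
  assumes "0 < \<epsilon>"
  shows "\<exists>T. \<forall>x0 u i t. admissible_input u \<and> norm x0 \<le> R \<and>
           t \<in> {tau u x0 i .. tau u x0 (Suc i)} \<and> T \<le> t \<longrightarrow> norm (sol u x0 i t) \<le> \<epsilon>"
proof -
  obtain M where M: "\<And>z. norm z \<le> R \<Longrightarrow> V z \<le> M"
    using continuous_bounded_on_cball[OF V_cont] by blast
  obtain \<eta> where \<eta>: "0 < \<eta>" "\<And>z. V z \<le> \<eta> \<Longrightarrow> norm z < \<epsilon>"
    using positive_definite_small_level[OF V_cont V_coercive V_pos assms] by blast
  have "closed {z. \<eta> \<le> V z}" by (rule closed_Collect_le[OF continuous_on_const V_cont])
  moreover have "0 < W z" if "z \<in> {z. \<eta> \<le> V z}" for z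
  proof -
    have "z \<noteq> 0" using that V_zero \<eta>(1) by auto
    then show ?thesis by (rule W_pos)
  qed
  ultimately obtain c where c: "0 < c" "\<forall>z\<in>{z. \<eta> \<le> V z}. V z \<le> M \<longrightarrow> c \<le> W z"
    using sublevel_positive_lower_bound[OF V_cont V_coercive _ W_cont] by blast
  have "norm (sol u x0 i t) \<le> \<epsilon>"
    if adm: "admissible_input u" and x0: "norm x0 \<le> R"
      and t: "t \<in> {tau u x0 i .. tau u x0 (Suc i)}" and late: "M / c + r + 1 \<le> t" for x0 u i t
  proof -
    have "t \<le> tau u x0 i + r"
      using t step_le_phi[OF adm, of x0 i] phi_le[of "node u x0 i"] by (simp add: hyb_tau_Suc)
    then have "M / c < tau u x0 i" using late by linarith
    then have late_node: "M < c * tau u x0 i" using c(1) by (simp add: pos_divide_less_eq mult.commute)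
    have "V (node u x0 i) \<le> \<eta>"
    proof (rule ccontr)
      assume "\<not> V (node u x0 i) \<le> \<eta>"
      moreover have "c \<le> W z" if "\<eta> < V z" "V z \<le> V x0" for z
        using c(2) that M[OF x0] by auto
      then have "\<eta> < V (node u x0 i) \<longrightarrow> V (node u x0 i) + c * tau u x0 i \<le> V x0"
        by (rule V_node_decay[OF adm])
      ultimately have "V (node u x0 i) + c * tau u x0 i \<le> V x0" by simp
      then show False using late_node M[OF x0] \<open>\<not> V (node u x0 i) \<le> \<eta>\<close> \<eta>(1) by linarith
    qed
    then have "V (sol u x0 i t) \<le> \<eta>" using V_sol_le_node[OF adm t] by linarith
    then show ?thesis using \<eta>(2) by (simp add: less_imp_le)
  qed
  then show ?thesis by blast
qed

theorem urgas: "URGAS \<phi> F"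
  unfolding URGAS_def
  using tau_unbounded uniform_stability uniform_boundedness uniform_attractivity by blast

end

section \<open>The implicit Euler method\<close>

lemma loc_lipschitz_continuous:
  fixes f :: "'a::metric_space \<Rightarrow> 'b::metric_space"
  assumes "loc_lipschitz f"
  shows "continuous_on UNIV f"
proof -
  have "isCont f x" for x
  proof -
    obtain d L where "0 < d" "L-lipschitz_on (ball x d) f"
      using assms unfolding loc_lipschitz_def by blast
    then show ?thesis
      using lipschitz_on_continuous_on continuous_on_eq_continuous_at[OF open_ball] by force
  qed
  then show ?thesis by (simp add: continuous_at_imp_continuous_on)
qed

lemma implicit_euler_sampled_lyapunov:
  fixes f :: "'a::euclidean_space \<Rightarrow> 'a"
  assumes f_cont: "continuous_on UNIV f" and f_zero: "f 0 = 0"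
    and convex: "convex_on UNIV V" and V_zero: "V 0 = 0"
    and V_pos: "\<And>x. x \<noteq> 0 \<Longrightarrow> 0 < V x" and V_coercive: "filterlim V at_top at_infinity"
    and g_cont: "continuous_on UNIV g" and V_deriv: "\<And>x. (V has_derivative (\<lambda>v. g x \<bullet> v)) (at x)"
    and dissipative: "\<And>x. x \<noteq> 0 \<Longrightarrow> g x \<bullet> f x < 0"
    and \<phi>bar_cont: "continuous_on UNIV \<phi>bar" and \<phi>bar_pos: "\<And>x. 0 < \<phi>bar x"
    and unique: "\<And>x h. 0 \<le> h \<Longrightarrow> h \<le> \<phi>bar x \<Longrightarrow> \<exists>!Y. Y = x + h *\<^sub>R f Y"
    and "0 < r"
  shows "sampled_lyapunov (\<lambda>x. min (\<phi>bar x) r) (\<lambda>h x. f (THE Y. Y = x + h *\<^sub>R f Y))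
           V (\<lambda>x. - (g x \<bullet> f x)) r"
proof -
  have W_nonneg: "0 \<le> - (g x \<bullet> f x)" for x
    using dissipative[of x] f_zero by (cases "x = 0") auto
  have euler_step: "Y = x + h *\<^sub>R f Y" "V Y \<le> V x"
    "V (x + h *\<^sub>R f Y) + h * - (g (x + h *\<^sub>R f Y) \<bullet> f (x + h *\<^sub>R f Y)) \<le> V x"
    if "0 < h" "h \<le> min (\<phi>bar x) r" and Y_def: "Y = (THE Y. Y = x + h *\<^sub>R f Y)" for x h Y
  proof -
    show Y: "Y = x + h *\<^sub>R f Y"
      unfolding Y_def using theI'[OF unique] that by simp
    show decrease: "V (x + h *\<^sub>R f Y) + h * - (g (x + h *\<^sub>R f Y) \<bullet> f (x + h *\<^sub>R f Y)) \<le> V x"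
      using implicit_euler_decrease[where g = g and f = f, OF convex V_deriv Y] Y by simp
    show "V Y \<le> V x"
      using decrease W_nonneg[of Y] Y[symmetric] mult_nonneg_nonpos[of h "g Y \<bullet> f Y"] \<open>0 < h\<close>
      by simp
  qed
  show ?thesis
  proof unfold_locales
    show "continuous_on UNIV V"
      by (intro continuous_at_imp_continuous_on ballI has_derivative_continuous[OF V_deriv])
    show "continuous_on UNIV (\<lambda>x. - (g x \<bullet> f x))"
      by (intro continuous_intros g_cont f_cont)
    show "continuous_on UNIV (\<lambda>x. min (\<phi>bar x) r)"
      by (intro continuous_intros \<phi>bar_cont)
    show "V 0 = 0" "filterlim V at_top at_infinity" "\<And>x. min (\<phi>bar x) r \<le> r"
      using V_zero V_coercive by simp_all
    show "\<And>x. x \<noteq> 0 \<Longrightarrow> 0 < V x" "\<And>x. x \<noteq> 0 \<Longrightarrow> 0 < - (g x \<bullet> f x)"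
      "\<And>x. 0 < min (\<phi>bar x) r"
      using V_pos dissipative \<phi>bar_pos \<open>0 < r\<close> by simp_all
  next
    fix x :: 'a and h :: real
    assume "0 < h" "h \<le> min (\<phi>bar x) r"
    show "V (x + h *\<^sub>R f (THE Y. Y = x + h *\<^sub>R f Y))
        + h * - (g (x + h *\<^sub>R f (THE Y. Y = x + h *\<^sub>R f Y)) \<bullet> f (x + h *\<^sub>R f (THE Y. Y = x + h *\<^sub>R f Y)))
        \<le> V x"
      using euler_step(3)[OF \<open>0 < h\<close> \<open>h \<le> min (\<phi>bar x) r\<close> refl] .
  next
    fix x :: 'a and h s :: real
    assume h: "0 < h" "h \<le> min (\<phi>bar x) r" and s: "0 \<le> s" "s \<le> 1"
    show "V (x + (s * h) *\<^sub>R f (THE Y. Y = x + h *\<^sub>R f Y)) \<le> V x"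
      using implicit_euler_segment[where f = f, OF convex euler_step(1,2)[OF h refl] s] .
  qed
qed

theorem theorem4p15:
  fixes f :: "real^'n \<Rightarrow> real^'n" and V :: "real^'n \<Rightarrow> real"
    and \<phi>bar :: "real^'n \<Rightarrow> real" and r :: real
  assumes "loc_lipschitz f" and "f 0 = 0"
    and "convex_on UNIV V" and "\<forall>x. V x \<ge> 0" and "lyapunov_function V f"
    and "continuous_on UNIV \<phi>bar" and "\<forall>x. \<phi>bar x > 0"
    and "\<forall>x h. 0 \<le> h \<and> h \<le> \<phi>bar x \<longrightarrow> (\<exists>!Y. Y = x + h *\<^sub>R f Y)"
    and "r > 0"
  shows "URGAS (\<lambda>x. min (\<phi>bar x) r) (\<lambda>h x. f (THE Y. Y = x + h *\<^sub>R f Y))"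
proof -
  obtain g where g: "V 0 = 0" "\<forall>x. x \<noteq> 0 \<longrightarrow> V x > 0" "filterlim V at_top at_infinity"
    "continuous_on UNIV g" "\<forall>x. (V has_derivative (\<lambda>v. g x \<bullet> v)) (at x)"
    "\<forall>x. x \<noteq> 0 \<longrightarrow> g x \<bullet> f x < 0"
    using \<open>lyapunov_function V f\<close> unfolding lyapunov_function_def by blast
  have "sampled_lyapunov (\<lambda>x. min (\<phi>bar x) r) (\<lambda>h x. f (THE Y. Y = x + h *\<^sub>R f Y))
      V (\<lambda>x. - (g x \<bullet> f x)) r"
  proof (rule implicit_euler_sampled_lyapunov[where g = g])
    show "continuous_on UNIV f" using loc_lipschitz_continuous[OF assms(1)] .
    show "\<And>x. x \<noteq> 0 \<Longrightarrow> 0 < V x" using g(2) by blast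
    show "\<And>x. (V has_derivative (\<lambda>v. g x \<bullet> v)) (at x)" using g(5) by blast
    show "\<And>x. x \<noteq> 0 \<Longrightarrow> g x \<bullet> f x < 0" using g(6) by blast
    show "\<And>x. 0 < \<phi>bar x" using assms(7) by blast
    show "\<And>x h. 0 \<le> h \<Longrightarrow> h \<le> \<phi>bar x \<Longrightarrow> \<exists>!Y. Y = x + h *\<^sub>R f Y"
      using assms(8) by blast
  qed (fact assms g)+
  then show ?thesis by (rule sampled_lyapunov.urgas)
qed

end
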